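(* Inside the quotient field $Q(\mathbb{Z}[q]^{\mathbb{N}})$ one has $$\mathbb{Z}[q]^{\mathbb{N}}\cap\mathbb{Z}[q,q^{-1}][\Phi_{\mathbb{N}}^{-1}]=\mathbb{Z}[q,q^{-1}].$$
   Context: $q$ is an indeterminate, $\Phi_n(q)$ the $n$th cyclotomic polynomial, and $\Phi_{\mathbb{N}}^*$ the multiplicative subset of $\mathbb{Z}[q]$ generated by all $\Phi_n(q)$, $n\in\mathbb{N}$. $\mathbb{Z}[q]^{\mathbb{N}}=\varprojlim_{f\in\Phi_{\mathbb{N}}^*}\mathbb{Z}[q]/(f)$; it is an integral domain in which $q$ is invertible, and the natural map $\mathbb{Z}[q,q^{-1}]\to\mathbb{Z}[q]^{\mathbb{N}}$ is injective, so $\mathbb{Q}(q)\subset Q(\mathbb{Z}[q]^{\mathbb{N}})$, where $Q(\cdot)$ denotes the quotient field. $\mathbb{Z}[q,q^{-1}][\Phi_{\mathbb{N}}^{-1}]$ is the subring of $\mathbb{Q}(q)$ of fractions $f/g$ with $f\in\mathbb{Z}[q,q^{-1}]$, $g\in\Phi_{\mathbb{N}}^*$. *)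

theory Defs
  imports Complex_Main "HOL-Computational_Algebra.Polynomial" "HOL-Library.Multiset"
begin

definition cyclo_complex :: "nat \<Rightarrow> complex poly" where
  "cyclo_complex n = (\<Prod>k\<in>{k. k < n \<and> coprime k n}. [:- cis (2 * pi * real k / real n), 1:])"

definition cyclotomic :: "nat \<Rightarrow> int poly" where
  "cyclotomic n = (THE p. map_poly of_int p = cyclo_complex n)"

definition Phi_star :: "int poly set" where
  "Phi_star = {prod_mset (image_mset cyclotomic M) | M. \<forall>n\<in>#M. 0 < n}"

text \<open>Elements of Z[q]^N = lim_{f in Phi_star} Z[q]/(f), represented as families of
  representatives x f of residues mod f, compatible along divisibility.\<close>
definition habiro_elems :: "(int poly \<Rightarrow> int poly) set" where
  "habiro_elems = {x. \<forall>f\<in>Phi_star. \<forall>g\<in>Phi_star. f dvd g \<longrightarrow> f dvd (x g - x f)}"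

abbreviation qpow :: "nat \<Rightarrow> int poly" where
  "qpow k \<equiv> monom 1 k"

end

theory Submission
  imports Defs "HOL-Computational_Algebra.Fundamental_Theorem_Algebra"
begin

text \<open>If q^k g x = a in the Habiro ring, reducing modulo g^2, which lies in Phi_star, shows that
  g divides a, so a / (q^k g) is a Laurent polynomial. Conversely q is invertible modulo every
  element of Phi_star because Phi_n divides q^n - 1, so division by a power of q is defined
  compatibly in all quotients Z[q]/(f). That Phi_n has integer coefficients at all follows by
  induction from q^n - 1 = prod_{d | n} Phi_d, dividing by the monic product over d < n.\<close>

lemma map_poly_of_int_add: "map_poly of_int (p + q) = map_poly of_int p + map_poly of_int q"
  by (rule poly_eqI) (simp add: coeff_map_poly)

lemma map_poly_of_int_diff: "map_poly of_int (p - q) = map_poly of_int p - map_poly of_int q"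
  by (rule poly_eqI) (simp add: coeff_map_poly)

lemma map_poly_of_int_mult:
  "(map_poly of_int (p * q) :: 'a::comm_ring_1 poly) = map_poly of_int p * map_poly of_int q"
proof (induction p)
  case (pCons a p)
  then show ?case
    by (simp add: map_poly_pCons map_poly_of_int_add map_poly_smult algebra_simps)
qed simp

lemma map_poly_of_int_prod:
  "(map_poly of_int (prod f A) :: 'a::comm_ring_1 poly) = (\<Prod>x\<in>A. map_poly of_int (f x))"
  by (induction A rule: infinite_finite_induct) (simp_all add: map_poly_of_int_mult)

lemma map_poly_of_int_eq_iff:
  "(map_poly of_int p :: 'a::ring_char_0 poly) = map_poly of_int q \<longleftrightarrow> p = q"
  by (simp add: poly_eq_iff coeff_map_poly)

lemma degree_map_poly_of_int: "degree (map_poly of_int p :: 'a::ring_char_0 poly) = degree p"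
  by (rule degree_map_poly) simp

lemma lead_coeff_map_poly_of_int:
  "lead_coeff (map_poly of_int p :: 'a::ring_char_0 poly) = of_int (lead_coeff p)"
  by (simp add: degree_map_poly_of_int coeff_map_poly)

text \<open>The remainder of integer pseudo-division by the monic q is a multiple of q of smaller
  degree, hence zero.\<close>
lemma map_poly_of_int_factor_monic:
  fixes r :: "'a::{idom, ring_char_0} poly"
  assumes monic: "lead_coeff q = 1" and eq: "map_poly of_int p = map_poly of_int q * r"
  shows "\<exists>s. r = map_poly of_int s"
proof -
  have "q \<noteq> 0" using monic by auto
  obtain s t where st: "pseudo_divmod p q = (s, t)" by fastforce
  have p: "p = q * s + t" using pseudo_divmod(1)[OF \<open>q \<noteq> 0\<close> st] monic by simp
  have t: "t = 0 \<or> degree t < degree q" using pseudo_divmod(2)[OF \<open>q \<noteq> 0\<close> st] .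
  have rem: "map_poly of_int q * (r - map_poly of_int s) = map_poly of_int t"
    using eq p by (simp add: map_poly_of_int_add map_poly_of_int_mult algebra_simps)
  have q0: "(map_poly of_int q :: 'a poly) \<noteq> 0"
    using \<open>q \<noteq> 0\<close> map_poly_of_int_eq_iff[of q 0] by simp
  have "r = map_poly of_int s"
  proof (rule ccontr)
    assume "r \<noteq> map_poly of_int s"
    then have "degree t = degree q + degree (r - map_poly of_int s)" "t \<noteq> 0"
      using degree_mult_eq[OF q0, of "r - map_poly of_int s"] rem q0
      by (auto simp: degree_map_poly_of_int)
    with t show False by simp
  qed
  then show ?thesis ..
qed

lemma monom_minus_one_eq_prod_roots_of_unity:
  assumes "n > 0"
  shows "(monom 1 n - 1 :: complex poly) = (\<Prod>k<n. [:- cis (2 * pi * real k / real n), 1:])"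
proof -
  define p :: "complex poly" where "p = monom 1 n - 1"
  have "degree (monom 1 n + - 1 :: complex poly) = n"
    using assms by (subst degree_add_eq_left) (simp_all add: degree_monom_eq)
  then have "degree p = n"
    by (simp add: p_def)
  then have monic: "lead_coeff p = 1"
    using assms by (simp add: p_def)
  have "rsquarefree p"
    unfolding rsquarefree_roots
  proof (intro allI notI)
    fix z assume "poly p z = 0 \<and> poly (pderiv p) z = 0"
    then have "z ^ n = 1" "of_nat n * z ^ (n - 1) = 0"
      by (auto simp: p_def pderiv_diff pderiv_monom poly_monom)
    with assms show False by (cases "z = 0") (auto simp: zero_power)
  qed
  then have "p = smult (lead_coeff p) (\<Prod>z | poly p z = 0. [:-z, 1:])"
    by (simp add: complex_poly_decompose_rsquarefree)
  also have "\<dots> = (\<Prod>z | z ^ n = 1. [:-z, 1:])"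
    using monic by (simp add: p_def poly_monom)
  also have "\<dots> = (\<Prod>k<n. [:- cis (2 * pi * real k / real n), 1:])"
    using prod.reindex_bij_betw[OF bij_betw_roots_unity[OF assms], of "\<lambda>z. [:-z, 1:]"] by simp
  finally show ?thesis by (simp add: p_def)
qed

text \<open>Each fraction k/n with k < n is j/d in lowest terms for a unique divisor d of n.\<close>
lemma bij_betw_reduced_fractions:
  assumes "n > (0::nat)"
  shows "bij_betw (\<lambda>(d, j). j * (n div d)) (SIGMA d:{d. d dvd n}. {j. j < d \<and> coprime j d}) {..<n}"
proof (rule bij_betw_byWitness[where f' = "\<lambda>k. (n div gcd k n, k div gcd k n)"])
  show "\<forall>a \<in> (SIGMA d:{d. d dvd n}. {j. j < d \<and> coprime j d}).
      (\<lambda>k. (n div gcd k n, k div gcd k n)) ((\<lambda>(d, j). j * (n div d)) a) = a"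
  proof safe
    fix d j assume "d dvd n" "j < d" "coprime j d"
    then obtain e where "n = d * e" "e > 0" "d > 0" using assms by auto
    then show "n div gcd (j * (n div d)) n = d" "j * (n div d) div gcd (j * (n div d)) n = j"
      using \<open>coprime j d\<close> by (simp_all add: gcd_mult_right gcd.commute[of d j])
  qed
  show "\<forall>k \<in> {..<n}. (\<lambda>(d, j). j * (n div d)) ((\<lambda>k. (n div gcd k n, k div gcd k n)) k) = k"
  proof
    fix k assume k: "k \<in> {..<n}"
    have "n div (n div gcd k n) = gcd k n"
      using assms by (simp add: div_div_eq_right)
    then show "(\<lambda>(d, j). j * (n div d)) ((\<lambda>k. (n div gcd k n, k div gcd k n)) k) = k"
      by simp
  qed
  show "(\<lambda>(d, j). j * (n div d)) ` (SIGMA d:{d. d dvd n}. {j. j < d \<and> coprime j d}) \<subseteq> {..<n}"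
  proof safe
    fix d j assume "d dvd n" "j < d"
    then obtain e where "n = d * e" "e > 0" using assms by auto
    with \<open>j < d\<close> show "j * (n div d) < n" by simp
  qed
  show "(\<lambda>k. (n div gcd k n, k div gcd k n)) ` {..<n} \<subseteq> (SIGMA d:{d. d dvd n}. {j. j < d \<and> coprime j d})"
  proof safe
    fix k assume "k < n"
    show "n div gcd k n dvd n"
      by (metis dvd_div_mult_self dvd_triv_left gcd_dvd2)
    have "gcd k n > 0" using assms by simp
    then show "k div gcd k n < n div gcd k n"
        "coprime (k div gcd k n) (n div gcd k n)"
      using \<open>k < n\<close> assms by (auto simp: div_gcd_coprime intro: div_less_mono)
  qed
qed
lemma monom_minus_one_eq_prod_cyclo_complex:
  assumes "n > 0"
  shows "(monom 1 n - 1 :: complex poly) = (\<Prod>d | d dvd n. cyclo_complex d)"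
proof -
  let ?S = "SIGMA d:{d. d dvd n}. {j. j < d \<and> coprime j d}"
  have "(\<Prod>d | d dvd n. cyclo_complex d)
      = (\<Prod>(d, j)\<in>?S. [:- cis (2 * pi * real j / real d), 1:])"
    unfolding cyclo_complex_def using assms by (subst prod.Sigma) auto
  also have "\<dots> = (\<Prod>(d, j)\<in>?S. [:- cis (2 * pi * real (j * (n div d)) / real n), 1:])"
  proof (intro prod.cong refl, clarify)
    fix d j assume "d dvd n"
    then obtain e where "n = d * e" "e > 0" using assms by auto
    then show "[:- cis (2 * pi * real j / real d), 1:]
        = [:- cis (2 * pi * real (j * (n div d)) / real n), 1:]"
      by (simp add: mult.assoc)
  qed
  also have "\<dots> = (\<Prod>k<n. [:- cis (2 * pi * real k / real n), 1:])"
    using prod.reindex_bij_betw[OF bij_betw_reduced_fractions[OF assms],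
        of "\<lambda>k. [:- cis (2 * pi * real k / real n), 1:]"]
    by (simp add: case_prod_beta')
  finally show ?thesis
    using monom_minus_one_eq_prod_roots_of_unity[OF assms] by simp
qed

lemma lead_coeff_cyclo_complex: "lead_coeff (cyclo_complex n) = 1"
  by (simp add: cyclo_complex_def lead_coeff_prod)

lemma cyclotomic_eqI: "map_poly of_int p = cyclo_complex n \<Longrightarrow> cyclotomic n = p"
  unfolding cyclotomic_def by (rule the_equality) (metis map_poly_of_int_eq_iff)+

lemma of_int_cyclotomic: "n > 0 \<Longrightarrow> map_poly of_int (cyclotomic n) = cyclo_complex n"
proof (induction n rule: less_induct)
  case (less n)
  define D where "D = {d. d dvd n \<and> d < n}"
  define Q where "Q = (\<Prod>d\<in>D. cyclotomic d)"
  have Q: "map_poly of_int Q = (\<Prod>d\<in>D. cyclo_complex d)"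
    unfolding Q_def map_poly_of_int_prod D_def
    using less by (intro prod.cong refl less.IH) (auto intro: dvd_pos_nat)
  then have "of_int (lead_coeff Q) = (1 :: complex)"
    by (simp add: lead_coeff_prod lead_coeff_cyclo_complex flip: lead_coeff_map_poly_of_int)
  then have monic: "lead_coeff Q = 1" by simp
  have "{d. d dvd n} = insert n D"
    using less.prems by (auto simp: D_def dest: dvd_imp_le)
  then have "map_poly of_int (monom 1 n - 1) = map_poly of_int Q * cyclo_complex n"
    using monom_minus_one_eq_prod_cyclo_complex[OF less.prems] Q less.prems
    by (simp add: map_poly_of_int_diff map_poly_monom D_def)
  then obtain s where "cyclo_complex n = map_poly of_int s"
    using map_poly_of_int_factor_monic[OF monic] by blast
  then show ?case using cyclotomic_eqI by metis
qed

lemma monom_minus_one_eq_prod_cyclotomic: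
  assumes "n > 0"
  shows "(monom 1 n - 1 :: int poly) = (\<Prod>d | d dvd n. cyclotomic d)"
proof -
  have "(\<Prod>d | d dvd n. map_poly of_int (cyclotomic d)) = (\<Prod>d | d dvd n. cyclo_complex d)"
    using assms by (intro prod.cong refl of_int_cyclotomic) (auto intro: dvd_pos_nat)
  then have "(map_poly of_int (monom 1 n - 1) :: complex poly)
      = map_poly of_int (\<Prod>d | d dvd n. cyclotomic d)"
    using monom_minus_one_eq_prod_cyclo_complex[OF assms]
    by (simp add: map_poly_of_int_diff map_poly_monom map_poly_of_int_prod)
  then show ?thesis by (simp only: map_poly_of_int_eq_iff)
qed

lemma cyclotomic_dvd_monom_minus_one: "n > 0 \<Longrightarrow> cyclotomic n dvd monom 1 n - 1"
  by (simp add: monom_minus_one_eq_prod_cyclotomic dvd_prodI)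

definition invertible_mod :: "'a::comm_ring_1 \<Rightarrow> 'a \<Rightarrow> bool" where
  "invertible_mod x f \<longleftrightarrow> (\<exists>u. f dvd x * u - 1)"

lemma invertible_mod_one_modulus: "invertible_mod x 1"
  by (simp add: invertible_mod_def)

lemma invertible_mod_mult_modulus:
  assumes "invertible_mod x f" "invertible_mod x g"
  shows "invertible_mod x (f * g)"
proof -
  obtain u v where "f dvd x * u - 1" "g dvd x * v - 1"
    using assms by (auto simp: invertible_mod_def)
  then have "f * g dvd (x * u - 1) * (x * v - 1)" by (rule mult_dvd_mono)
  also have "(x * u - 1) * (x * v - 1) = - (x * (u + v - x * u * v) - 1)"
    by (simp add: algebra_simps)
  finally show ?thesis unfolding invertible_mod_def dvd_minus_iff ..
qed

lemma invertible_mod_power: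
  assumes "invertible_mod x f"
  shows "invertible_mod (x ^ m) f"
proof -
  obtain u where u: "f dvd x * u - 1" using assms by (auto simp: invertible_mod_def)
  have "f dvd x ^ m * u ^ m - 1"
  proof (induction m)
    case (Suc m)
    have eq: "x ^ Suc m * u ^ Suc m - 1 = (x ^ m * u ^ m) * (x * u - 1) + (x ^ m * u ^ m - 1)"
      by (simp add: algebra_simps)
    have "f dvd (x ^ m * u ^ m) * (x * u - 1) + (x ^ m * u ^ m - 1)"
      using Suc.IH u by (intro dvd_add dvd_mult)
    then show ?case by (simp only: eq)
  qed simp
  then show ?thesis unfolding invertible_mod_def ..
qed

lemma invertible_mod_dvd_cancel:
  assumes "invertible_mod x f" "f dvd x * y"
  shows "f dvd y"
proof -
  obtain u where "f dvd x * u - 1" using assms by (auto simp: invertible_mod_def)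
  moreover have "y = u * (x * y) - y * (x * u - 1)" by (simp add: algebra_simps)
  ultimately show ?thesis using assms(2) by (metis dvd_diff dvd_mult)
qed

lemma Phi_star_mult:
  assumes "f \<in> Phi_star" "g \<in> Phi_star"
  shows "f * g \<in> Phi_star"
proof -
  obtain M N where "f = prod_mset (image_mset cyclotomic M)" "\<forall>n\<in>#M. 0 < n"
    and "g = prod_mset (image_mset cyclotomic N)" "\<forall>n\<in>#N. 0 < n"
    using assms by (auto simp: Phi_star_def)
  then have "f * g = prod_mset (image_mset cyclotomic (M + N))" "\<forall>n\<in>#M + N. 0 < n"
    by auto
  then show ?thesis unfolding Phi_star_def by blast
qed

lemma invertible_mod_qpow_Phi_star:
  assumes "f \<in> Phi_star"
  shows "invertible_mod (qpow m) f"
proof -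
  obtain M where f: "f = prod_mset (image_mset cyclotomic M)" and M: "\<forall>n\<in>#M. 0 < n"
    using assms by (auto simp: Phi_star_def)
  have q_cyclotomic: "invertible_mod (qpow 1) (cyclotomic n)" if "n > 0" for n
  proof -
    have "qpow 1 * qpow (n - 1) - 1 = (monom 1 n - 1 :: int poly)"
      using that by (simp add: mult_monom)
    then show ?thesis
      using cyclotomic_dvd_monom_minus_one[OF that] unfolding invertible_mod_def by metis
  qed
  have "invertible_mod (qpow 1) f"
    unfolding f using M
  proof (induction M)
    case (add n M)
    then have "invertible_mod (qpow 1) (cyclotomic n * prod_mset (image_mset cyclotomic M))"
      by (intro invertible_mod_mult_modulus q_cyclotomic) simp_all
    then show ?case by simp
  qed (simp add: invertible_mod_one_modulus)
  then show ?thesis using invertible_mod_power[of "qpow 1" f m] by (simp add: monom_power)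
qed

lemma habiro_quotient_exists:
  assumes "\<forall>f\<in>Phi_star. invertible_mod c f"
  shows "\<exists>x\<in>habiro_elems. \<forall>f\<in>Phi_star. f dvd c * x f - b"
proof -
  define inv where "inv f = (SOME u. f dvd c * u - 1)" for f
  have inv: "f dvd c * inv f - 1" if f: "f \<in> Phi_star" for f
  proof -
    obtain u where "f dvd c * u - 1"
      using assms f by (auto simp: invertible_mod_def)
    then show ?thesis unfolding inv_def by (rule someI)
  qed
  define x where "x f = b * inv f" for f
  have "x \<in> habiro_elems" unfolding habiro_elems_def
  proof (intro CollectI ballI impI)
    fix f h assume f: "f \<in> Phi_star" and h: "h \<in> Phi_star" and "f dvd h"
    then have "f dvd (c * inv h - 1) - (c * inv f - 1)"
      using inv dvd_trans by (blast intro: dvd_diff)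
    moreover have "c * (x h - x f) = b * ((c * inv h - 1) - (c * inv f - 1))"
      by (simp add: x_def algebra_simps)
    ultimately have "f dvd c * (x h - x f)"
      by (metis dvd_mult)
    then show "f dvd x h - x f"
      using invertible_mod_dvd_cancel assms f by blast
  qed
  moreover have "f dvd c * x f - b" if "f \<in> Phi_star" for f
  proof -
    have "c * x f - b = b * (c * inv f - 1)" by (simp add: x_def algebra_simps)
    then show ?thesis using inv[OF that] by simp
  qed
  ultimately show ?thesis by blast
qed

theorem proposition7p5:
  fixes a g :: "int poly" and k :: nat
  assumes "g \<in> Phi_star"
  shows "(\<exists>x\<in>habiro_elems. \<forall>f\<in>Phi_star. f dvd (qpow k * g * x f - a))
     \<longleftrightarrow> (\<exists>b :: int poly. \<exists>m :: nat. qpow m * a = qpow k * g * b)"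
proof
  assume "\<exists>x\<in>habiro_elems. \<forall>f\<in>Phi_star. f dvd (qpow k * g * x f - a)"
  then obtain x where "\<forall>f\<in>Phi_star. f dvd qpow k * g * x f - a" by blast
  then have "g * g dvd qpow k * g * x (g * g) - a"
    using Phi_star_mult[OF assms assms] by blast
  then have div: "g dvd qpow k * g * x (g * g) - a"
    by (rule dvd_mult_left)
  have "g dvd qpow k * g * x (g * g) - (qpow k * g * x (g * g) - a)"
    by (rule dvd_diff[OF _ div]) simp
  then have "g dvd a" by simp
  then obtain c where "a = g * c" ..
  then show "\<exists>b m. qpow m * a = qpow k * g * b"
    by (auto simp: ac_simps)
next
  assume "\<exists>b m. qpow m * a = qpow k * g * b"
  then obtain b m where bm: "qpow m * a = qpow k * g * b" by blast
  obtain x where x: "x \<in> habiro_elems" "\<forall>f\<in>Phi_star. f dvd qpow m * x f - b"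
    using habiro_quotient_exists invertible_mod_qpow_Phi_star by blast
  have "f dvd qpow k * g * x f - a" if f: "f \<in> Phi_star" for f
  proof -
    have "qpow m * (qpow k * g * x f - a) = qpow k * g * (qpow m * x f - b)"
      using bm by (simp add: algebra_simps)
    then have "f dvd qpow m * (qpow k * g * x f - a)"
      using x(2) f by (metis dvd_mult)
    then show ?thesis
      using invertible_mod_dvd_cancel invertible_mod_qpow_Phi_star f by blast
  qed
  then show "\<exists>x\<in>habiro_elems. \<forall>f\<in>Phi_star. f dvd qpow k * g * x f - a"
    using x(1) by blast
qed

end
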